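(* Let $(\Omega,\mathcal F,\mathbb P)$ be a probability space with $\Omega$ compact. Let $\mathfrak G$ (option sellers) and $\mathfrak R$ (option buyers) be finite disjoint index sets, and for each $i\in\mathfrak G\cup\mathfrak R$ let $\pi_i^\omega$ (electricity-market profit) and $p_i^{\omega,*}$ (real-time price faced by $i$) be given square-integrable random variables. Fix $\overline q,\overline K,\overline\Delta>0$ and $\mathcal A_0:=[0,\overline q]\times[0,\overline K]\times[0,\overline\Delta]$. Assume every participant is risk-neutral, i.e. its acceptable set is $$\mathcal A_r=\{(q,K,\Delta)\in\mathcal A_0:\ \mathbb E[\pi_r^\omega-q\Delta+(p_r^{\omega,*}-K)^+\Delta]\ge\mathbb E[\pi_r^\omega]\}\quad (r\in\mathfrak R),$$ $$\mathcal A_g=\{(q,K,\Delta)\in\mathcal A_0:\ \mathbb E[\pi_g^\omega+q\Delta-(p_g^{\omega,*}-K)^+\Delta]\ge\mathbb E[\pi_g^\omega]\}\quad (g\in\mathfrak G).$$ Consider the problem of maximizing $\mathbb E[\mathsf{MS}^\omega]$, where $$\mathsf{MS}^\omega:=\sum_{r\in\mathfrak R}q_r\Delta_r-\sum_{g\in\mathfrak G}q_g\Delta_g-\sum_{r\in\mathfrak R}(p_r^{\omega,*}-K_r)^+\Delta_r+\sum_{g\in\mathfrak G}(p_g^{\omega,*}-K_g)^+\delta_g^\omega,$$ over $(q_i,K_i,\Delta_i)\in\mathbb R_+^3$ for all $i\in\mathfrak G\cup\mathfrak R$ and $\mathcal F$-measurable $\delta_g:\Omega\to[0,\Delta_g]$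 in $\mathcal L_2(\Omega)$ for $g\in\mathfrak G$, subject to $\sum_{g}\Delta_g=\sum_r\Delta_r$, $(q_i,K_i,\Delta_i)\in\mathcal A_i$ for all $i$, and, $\mathbb P$-almost surely, $\delta_g^\omega\in[0,\Delta_g]$ for all $g$ and $\sum_{g\in\mathfrak G}\delta_g^\omega=\sum_{r\in\mathfrak R}\Delta_r\mathbf 1\{p_r^{\omega,*}\ge K_r\}$. Then the optimal value of this problem is $0$; that is, $\mathbb E[\mathsf{MS}^{\omega,*}]=0$ at an optimal solution.
   Context: $z^+:=\max\{z,0\}$ and $\mathbf 1\{\cdot\}$ is the indicator of an event. $\mathsf{MS}^\omega$ is the merchandising surplus of a profit-maximizing market maker that buys cash-settled call options (option price $q$, strike $K$, quantity $\Delta$; payoff $(p-K)^+$ per unit at real-time price $p$) from sellers $g$ and sells them to buyers $r$, with $\delta_g^\omega$ the amount of cashable options allocated to seller $g$ in scenario $\omega$. *)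

theory Defs
  imports "HOL-Probability.Probability"
begin

definition sq_int :: "'a measure \<Rightarrow> ('a \<Rightarrow> real) \<Rightarrow> bool" where
  "sq_int M X \<longleftrightarrow> X \<in> borel_measurable M \<and> integrable M (\<lambda>w. (X w)^2)"

definition posp :: "real \<Rightarrow> real" where
  "posp z = max z 0"

definition A0 :: "real \<Rightarrow> real \<Rightarrow> real \<Rightarrow> (real \<times> real \<times> real) set" where
  "A0 qb Kb Db = {0..qb} \<times> {0..Kb} \<times> {0..Db}"

definition acc_buyer ::
  "'a measure \<Rightarrow> real \<Rightarrow> real \<Rightarrow> real \<Rightarrow> ('a \<Rightarrow> real) \<Rightarrow> ('a \<Rightarrow> real) \<Rightarrow> (real \<times> real \<times> real) set" where
  "acc_buyer M qb Kb Db pr p = {(q, K, D) \<in> A0 qb Kb Db.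
     (\<integral>w. pr w - q * D + posp (p w - K) * D \<partial>M) \<ge> (\<integral>w. pr w \<partial>M)}"

definition acc_seller ::
  "'a measure \<Rightarrow> real \<Rightarrow> real \<Rightarrow> real \<Rightarrow> ('a \<Rightarrow> real) \<Rightarrow> ('a \<Rightarrow> real) \<Rightarrow> (real \<times> real \<times> real) set" where
  "acc_seller M qb Kb Db pr p = {(q, K, D) \<in> A0 qb Kb Db.
     (\<integral>w. pr w + q * D - posp (p w - K) * D \<partial>M) \<ge> (\<integral>w. pr w \<partial>M)}"

definition MS ::
  "'i set \<Rightarrow> 'i set \<Rightarrow> ('i \<Rightarrow> 'a \<Rightarrow> real) \<Rightarrow> ('i \<Rightarrow> real) \<Rightarrow> ('i \<Rightarrow> real) \<Rightarrow> ('i \<Rightarrow> real)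
     \<Rightarrow> ('i \<Rightarrow> 'a \<Rightarrow> real) \<Rightarrow> 'a \<Rightarrow> real" where
  "MS G R p q K D \<delta> w =
     (\<Sum>r\<in>R. q r * D r) - (\<Sum>g\<in>G. q g * D g)
     - (\<Sum>r\<in>R. posp (p r w - K r) * D r) + (\<Sum>g\<in>G. posp (p g w - K g) * \<delta> g w)"

definition feasible ::
  "'a measure \<Rightarrow> 'i set \<Rightarrow> 'i set \<Rightarrow> real \<Rightarrow> real \<Rightarrow> real \<Rightarrow> ('i \<Rightarrow> 'a \<Rightarrow> real) \<Rightarrow> ('i \<Rightarrow> 'a \<Rightarrow> real)
     \<Rightarrow> ('i \<Rightarrow> real) \<Rightarrow> ('i \<Rightarrow> real) \<Rightarrow> ('i \<Rightarrow> real) \<Rightarrow> ('i \<Rightarrow> 'a \<Rightarrow> real) \<Rightarrow> bool" where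
  "feasible M G R qb Kb Db pr p q K D \<delta> \<longleftrightarrow>
     (\<forall>i\<in>G \<union> R. q i \<ge> 0 \<and> K i \<ge> 0 \<and> D i \<ge> 0) \<and>
     (\<forall>g\<in>G. sq_int M (\<delta> g) \<and> (\<forall>w\<in>space M. 0 \<le> \<delta> g w \<and> \<delta> g w \<le> D g)) \<and>
     (\<Sum>g\<in>G. D g) = (\<Sum>r\<in>R. D r) \<and>
     (\<forall>r\<in>R. (q r, K r, D r) \<in> acc_buyer M qb Kb Db (pr r) (p r)) \<and>
     (\<forall>g\<in>G. (q g, K g, D g) \<in> acc_seller M qb Kb Db (pr g) (p g)) \<and>
     (AE w in M. (\<forall>g\<in>G. 0 \<le> \<delta> g w \<and> \<delta> g w \<le> D g) \<and>
        (\<Sum>g\<in>G. \<delta> g w) = (\<Sum>r\<in>R. D r * (if p r w \<ge> K r then 1 else 0)))"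

end

theory Submission
  imports Defs
begin

(* Risk neutrality turns each acceptability condition into a comparison of the premium with the
   expected option payoff: every buyer pays at most E[(p_r - K_r)^+] per unit and every seller
   receives at least E[(p_g - K_g)^+] per unit.  Since a seller never pays out more than
   (p_g - K_g)^+ on at most Delta_g units, each buyer's and each seller's contribution to the
   expected surplus is nonpositive, so E[MS] <= 0; the empty trade attains 0. *)

lemma posp_nonneg: "0 \<le> posp z"
  unfolding posp_def by simp

lemma (in prob_space) integrable_if_sq_int:
  assumes "sq_int M X"
  shows "integrable M X"
  using assms unfolding sq_int_def by (blast intro: square_integrable_imp_integrable)

lemma (in finite_measure) integrable_posp_diff:
  assumes "integrable M X"
  shows "integrable M (\<lambda>w. posp (X w - c))"
  unfolding posp_def using assms by auto

lemma integrable_mult_bounded_nonneg: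
  fixes f g :: "'a \<Rightarrow> real"
  assumes f: "integrable M f" and g: "g \<in> borel_measurable M"
    and bound: "\<forall>w\<in>space M. 0 \<le> g w \<and> g w \<le> C"
  shows "integrable M (\<lambda>w. f w * g w)"
proof (rule Bochner_Integration.integrable_bound)
  show "integrable M (\<lambda>w. f w * C)"
    using f by simp
  show "(\<lambda>w. f w * g w) \<in> borel_measurable M"
    using f g by measurable
  show "AE w in M. norm (f w * g w) \<le> norm (f w * C)"
    using bound by (intro AE_I2) (auto simp: abs_mult intro!: mult_left_mono)
qed

lemma (in prob_space) acc_buyer_premium_le_payoff:
  assumes "integrable M pr" "integrable M p"
    and "(q, K, D) \<in> acc_buyer M qb Kb Db pr p"
  shows "q * D \<le> (\<integral>w. posp (p w - K) \<partial>M) * D"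
proof -
  have "(\<integral>w. pr w - q * D + posp (p w - K) * D \<partial>M)
      = (\<integral>w. pr w \<partial>M) - q * D + (\<integral>w. posp (p w - K) \<partial>M) * D"
    using assms(1) integrable_posp_diff[OF assms(2)] by (simp add: prob_space)
  with assms(3) show ?thesis
    unfolding acc_buyer_def by simp
qed

lemma (in prob_space) acc_seller_payoff_le_premium:
  assumes "integrable M pr" "integrable M p"
    and "(q, K, D) \<in> acc_seller M qb Kb Db pr p"
  shows "(\<integral>w. posp (p w - K) \<partial>M) * D \<le> q * D"
proof -
  have "(\<integral>w. pr w + q * D - posp (p w - K) * D \<partial>M)
      = (\<integral>w. pr w \<partial>M) + q * D - (\<integral>w. posp (p w - K) \<partial>M) * D"
    using assms(1) integrable_posp_diff[OF assms(2)] by (simp add: prob_space)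
  with assms(3) show ?thesis
    unfolding acc_seller_def by simp
qed

lemma (in prob_space) acc_seller_delivery_le_premium:
  assumes "integrable M pr" "integrable M p"
    and "(q, K, D) \<in> acc_seller M qb Kb Db pr p"
    and "\<delta> \<in> borel_measurable M" "\<forall>w\<in>space M. 0 \<le> \<delta> w \<and> \<delta> w \<le> D"
  shows "(\<integral>w. posp (p w - K) * \<delta> w \<partial>M) \<le> q * D"
proof -
  have payoff: "integrable M (\<lambda>w. posp (p w - K))"
    using integrable_posp_diff[OF assms(2)] .
  have "(\<integral>w. posp (p w - K) * \<delta> w \<partial>M) \<le> (\<integral>w. posp (p w - K) * D \<partial>M)"
    using integrable_mult_bounded_nonneg[OF payoff assms(4,5)] payoff assms(5)
    by (intro integral_mono) (auto intro!: mult_left_mono posp_nonneg)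
  also have "\<dots> \<le> q * D"
    using acc_seller_payoff_le_premium[OF assms(1-3)] by simp
  finally show ?thesis .
qed

lemma (in prob_space) integral_MS:
  assumes "finite G" "finite R"
    and payoff: "\<And>r. r \<in> R \<Longrightarrow> integrable M (\<lambda>w. posp (p r w - K r))"
    and delivery: "\<And>g. g \<in> G \<Longrightarrow> integrable M (\<lambda>w. posp (p g w - K g) * \<delta> g w)"
  shows "(\<integral>w. MS G R p q K D \<delta> w \<partial>M)
       = (\<Sum>r\<in>R. q r * D r - (\<integral>w. posp (p r w - K r) \<partial>M) * D r)
       + (\<Sum>g\<in>G. (\<integral>w. posp (p g w - K g) * \<delta> g w \<partial>M) - q g * D g)"
proof -
  have "(\<integral>w. (\<Sum>r\<in>R. posp (p r w - K r) * D r) \<partial>M)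
      = (\<Sum>r\<in>R. (\<integral>w. posp (p r w - K r) \<partial>M) * D r)"
    using payoff by (subst Bochner_Integration.integral_sum) auto
  moreover have "(\<integral>w. (\<Sum>g\<in>G. posp (p g w - K g) * \<delta> g w) \<partial>M)
      = (\<Sum>g\<in>G. (\<integral>w. posp (p g w - K g) * \<delta> g w \<partial>M))"
    using delivery by (subst Bochner_Integration.integral_sum) auto
  moreover have "integrable M (\<lambda>w. \<Sum>r\<in>R. posp (p r w - K r) * D r)"
    "integrable M (\<lambda>w. \<Sum>g\<in>G. posp (p g w - K g) * \<delta> g w)"
    using payoff delivery by auto
  ultimately show ?thesis
    unfolding MS_def by (simp add: prob_space sum_subtractf)
qed

lemma feasible_no_trade:
  assumes "prob_space M" "qb > 0" "Kb > 0" "Db > 0"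
  shows "feasible M G R qb Kb Db pr p (\<lambda>_. 0) (\<lambda>_. 0) (\<lambda>_. 0) (\<lambda>_ _. 0)"
proof -
  interpret prob_space M by fact
  have "(0, 0, 0) \<in> A0 qb Kb Db"
    using assms unfolding A0_def by auto
  then show ?thesis
    unfolding feasible_def acc_buyer_def acc_seller_def sq_int_def by simp
qed

lemma (in prob_space) feasible_integral_MS_nonpos:
  assumes "finite G" "finite R"
    and pr: "\<And>i. i \<in> G \<union> R \<Longrightarrow> integrable M (pr i)"
    and p: "\<And>i. i \<in> G \<union> R \<Longrightarrow> integrable M (p i)"
    and F: "feasible M G R qb Kb Db pr p q K D \<delta>"
  shows "(\<integral>w. MS G R p q K D \<delta> w \<partial>M) \<le> 0"
proof -
  have \<delta>: "\<delta> g \<in> borel_measurable M" "\<forall>w\<in>space M. 0 \<le> \<delta> g w \<and> \<delta> g w \<le> D g" if "g \<in> G" for g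
    using F that unfolding feasible_def sq_int_def by auto
  have buyers: "q r * D r - (\<integral>w. posp (p r w - K r) \<partial>M) * D r \<le> 0" if "r \<in> R" for r
  proof -
    have "(q r, K r, D r) \<in> acc_buyer M qb Kb Db (pr r) (p r)"
      using F that unfolding feasible_def by blast
    with that show ?thesis
      using acc_buyer_premium_le_payoff[OF pr p, of r] by simp
  qed
  have sellers: "(\<integral>w. posp (p g w - K g) * \<delta> g w \<partial>M) - q g * D g \<le> 0" if "g \<in> G" for g
  proof -
    have "(q g, K g, D g) \<in> acc_seller M qb Kb Db (pr g) (p g)"
      using F that unfolding feasible_def by blast
    with that show ?thesis
      using acc_seller_delivery_le_premium[OF pr p _ \<delta>, of g] by simp
  qed
  have "(\<integral>w. MS G R p q K D \<delta> w \<partial>M)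
       = (\<Sum>r\<in>R. q r * D r - (\<integral>w. posp (p r w - K r) \<partial>M) * D r)
       + (\<Sum>g\<in>G. (\<integral>w. posp (p g w - K g) * \<delta> g w \<partial>M) - q g * D g)"
    using assms(1,2) p \<delta> integrable_posp_diff
    by (intro integral_MS integrable_mult_bounded_nonneg) auto
  also have "\<dots> \<le> 0"
    using buyers sellers by (simp add: add_nonpos_nonpos sum_nonpos)
  finally show ?thesis .
qed

theorem proposition2:
  fixes M :: "('a::topological_space) measure"
    and G R :: "'i set"
    and pr p :: "'i \<Rightarrow> 'a \<Rightarrow> real"
    and qb Kb Db :: real
  assumes "prob_space M"
    and "compact (space M)"
    and "finite G" and "finite R" and "G \<inter> R = {}"
    and "\<forall>i\<in>G \<union> R. sq_int M (pr i) \<and> sq_int M (p i)"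
    and "qb > 0" and "Kb > 0" and "Db > 0"
  shows "(\<exists>q K D \<delta>. feasible M G R qb Kb Db pr p q K D \<delta> \<and>
            (\<integral>w. MS G R p q K D \<delta> w \<partial>M) = 0)
       \<and> (\<forall>q K D \<delta>. feasible M G R qb Kb Db pr p q K D \<delta> \<longrightarrow>
            (\<integral>w. MS G R p q K D \<delta> w \<partial>M) \<le> 0)"
proof (intro conjI allI impI)
  interpret prob_space M by fact
  show "\<exists>q K D \<delta>. feasible M G R qb Kb Db pr p q K D \<delta> \<and> (\<integral>w. MS G R p q K D \<delta> w \<partial>M) = 0"
    using feasible_no_trade[OF assms(1,7-9)] unfolding MS_def by fastforce
  fix q K D \<delta>
  assume "feasible M G R qb Kb Db pr p q K D \<delta>"
  moreover have "integrable M (pr i)" "integrable M (p i)" if "i \<in> G \<union> R" for i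
    using assms(6) that by (auto intro: integrable_if_sq_int)
  ultimately show "(\<integral>w. MS G R p q K D \<delta> w \<partial>M) \<le> 0"
    using assms(3,4) by (auto intro: feasible_integral_MS_nonpos)
qed

end
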